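(* Let $P_0\in\mathbb{C}^{n+1}$, let $f_1,\dots,f_N$ be holomorphic near $P_0$ with $f_\mu(P_0)=0$ for all $\mu$, let $0\le k\le n$, and let $G_1,\dots,G_k$ be holomorphic near $P_0$. For an index tuple $\mu=(\mu_1<\cdots<\mu_{n-k})$ in $\{1,\dots,N\}$ put $$A_\mu=\frac{\partial(f_{\mu_1},\dots,f_{\mu_{n-k}},G_1,\dots,G_k)}{\partial(z_1,\dots,z_n)},\qquad B_{\mu,\nu}=\frac{\partial(f_{\mu_1},\dots,f_{\mu_{n-k}},G_1,\dots,G_k,f_\nu)}{\partial(z_1,\dots,z_{n+1})},$$ $$E_\mu=A_\mu+\sum_{\nu=1}^N B_{\mu,\nu}\overline{f_\nu},$$ and (for $k\ge1$) $$T=\sum_{j=1}^k\ \sum_{1\le\lambda_1<\cdots<\lambda_{n-k+1}\le N}\left|\frac{\partial(f_{\lambda_1},\dots,f_{\lambda_{n-k+1}},G_1,\dots,\widehat{G_j},\dots,G_k)}{\partial(z_1,\dots,z_n)}\right|,$$ with $T=0$ when $k=0$ (here $\widehat{G_j}$ means $G_j$ is omitted). Then there exist an open neighborhood $U$ of $P_0$ and a constant $C>0$ such that on $U$: (i) $\displaystyle\sum_{\mu}|A_\mu|\le C\Big(\sum_\mu|E_\mu|+T\Big)$; (ii) for every $\mu$ and every $\nu\in\{1,\dots,N\}$, $\displaystyle |B_{\mu,\nu}|\le C\Big(\sum_{\mu'}|A_{\mu'}|+T\Big)$, where the sums over $\mu,\mu'$ run over all increasing $(n-k)$-tuples in $\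{1,\dots,N\}$.
   Context: For holomorphic functions $h_1,\dots,h_m$, $\frac{\partial(h_1,\dots,h_m)}{\partial(z_1,\dots,z_m)}$ denotes the determinant of the $m\times m$ matrix whose $i$-th row is $(\partial h_i/\partial z_1,\dots,\partial h_i/\partial z_m)$; the $n\times n$ Jacobians use only the variables $z_1,\dots,z_n$. *)

theory Defs
  imports "HOL-Analysis.Analysis"
begin

text \<open>Points of C^(n+1) are vectors of type complex^'m with CARD('m) = n+1; the
 coordinates z_1,...,z_(n+1) are the elements of 'm listed in increasing order
 (0-based: coord 0, ..., coord n).\<close>

definition coord :: "nat \<Rightarrow> 'm::{finite,linorder}" where
  "coord j = sorted_list_of_set (UNIV :: 'm set) ! j"

definition holo_near :: "(complex^'m \<Rightarrow> complex) \<Rightarrow> complex^'m \<Rightarrow> bool" where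
  "holo_near f P \<longleftrightarrow> (\<exists>V. open V \<and> P \<in> V \<and>
      (\<forall>z\<in>V. \<exists>c::complex^'m. (f has_derivative (\<lambda>h. \<Sum>i\<in>UNIV. c$i * h$i)) (at z)))"

definition cpartial :: "(complex^'m \<Rightarrow> complex) \<Rightarrow> 'm \<Rightarrow> complex^'m \<Rightarrow> complex" where
  "cpartial f i z = frechet_derivative f (at z) (axis i 1)"

text \<open>jac m [h_1,...,h_m] z = d(h_1,...,h_m)/d(z_1,...,z_m) at z (Leibniz formula).\<close>
definition jac :: "nat \<Rightarrow> (complex^('m::{finite,linorder}) \<Rightarrow> complex) list \<Rightarrow> complex^('m::{finite,linorder}) \<Rightarrow> complex" where
  "jac m hs z = (\<Sum>p | p permutes {..<m}.
      of_int (sign p) * (\<Prod>i<m. cpartial (hs ! i) (coord (p i)) z))"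

definition incr_tuples :: "nat \<Rightarrow> nat \<Rightarrow> nat list set" where
  "incr_tuples N r = {xs. sorted_wrt (<) xs \<and> length xs = r \<and> set xs \<subseteq> {1..N}}"

end

theory Submission
  imports Defs "HOL-Complex_Analysis.Cauchy_Integral_Formula" "Jordan_Normal_Form.Determinant"
begin

text \<open>Cauchy's estimates bound all first partial derivatives of the f_mu and G_j by some K near
  P0. Expanding B_(mu,nu) along its last column, every minor is, up to sign and a reordering of its
  rows, either some A_mu' or one of the determinants summed in T, or it vanishes because two of its
  rows coincide; this gives (ii). Since f_nu(P0) = 0, the correction
  E_mu - A_mu = sum_nu B_(mu,nu) conj(f_nu) is at most half of sum |A| + T on a small neighbourhood,
  and absorbing it into the left-hand side gives (i).\<close>

lemma norm_axis: "norm (axis i w :: 'a::real_normed_vector^'n) = norm w"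
proof -
  have "(\<Sum>j\<in>UNIV. (norm ((axis i w :: 'a^'n) $ j))\<^sup>2) = (norm w)\<^sup>2"
    by (simp add: axis_def if_distrib[of norm] if_distrib[of "\<lambda>x. x\<^sup>2"] cong: if_cong)
  then show ?thesis by (simp add: norm_vec_def L2_set_def)
qed

lemma axis_zero [simp]: "axis i 0 = 0"
  by simp

lemma dist_add_axis [simp]: "dist z (z + axis i w) = norm (w :: 'a::real_normed_vector)"
  by (simp add: dist_norm norm_axis)

lemma bounded_linear_axis: "bounded_linear (axis i :: 'a::real_normed_vector \<Rightarrow> 'a^'n)"
proof (rule bounded_linear_intro[where K=1])
  show "axis i (x + y) = axis i x + (axis i y :: 'a^'n)" for x y
    by (simp add: axis_def Finite_Cartesian_Product.vec_eq_iff)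
  show "axis i (r *\<^sub>R x) = r *\<^sub>R (axis i x :: 'a^'n)" for r x
    by (simp add: axis_def Finite_Cartesian_Product.vec_eq_iff)
qed (simp add: norm_axis)

lemma linear_form_axis: "(\<Sum>j\<in>UNIV. (c::'a^'n) $ j * axis i w $ j) = c $ i * (w :: 'a::semiring_0)"
  by (simp add: axis_def if_distrib[of "\<lambda>x. _ * x"] cong: if_cong)

lemma cpartial_eq_coefficient:
  fixes c :: "complex^'m"
  assumes "(f has_derivative (\<lambda>h. \<Sum>j\<in>UNIV. c $ j * h $ j)) (at z)"
  shows "cpartial f i z = c $ i"
  using frechet_derivative_at[OF assms, symmetric] by (simp add: cpartial_def linear_form_axis)

lemma has_field_derivative_axis_slice:
  fixes c :: "complex^'m"
  assumes "(f has_derivative (\<lambda>h. \<Sum>j\<in>UNIV. c $ j * h $ j)) (at (z + axis i w))"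
  shows "((\<lambda>w. f (z + axis i w)) has_field_derivative c $ i) (at w)"
proof -
  have "((\<lambda>w. z + axis i w) has_derivative axis i) (at w)"
    using has_derivative_add[OF has_derivative_const bounded_linear_imp_has_derivative[OF bounded_linear_axis]]
    by simp
  from diff_chain_at[OF this assms]
  have "((\<lambda>w. f (z + axis i w)) has_derivative (\<lambda>h. c $ i * h)) (at w)"
    by (simp add: o_def linear_form_axis)
  then show ?thesis
    by (simp add: has_field_derivative_def)
qed

text \<open>Cauchy's estimate, applied on the complex line through z in direction i.\<close>
lemma norm_cpartial_le:
  fixes f :: "complex^'m \<Rightarrow> complex"
  assumes r: "r > 0"
    and deriv: "\<And>x. x \<in> ball z (2*r) \<Longrightarrow> \<exists>c::complex^'m. (f has_derivative (\<lambda>h. \<Sum>j\<in>UNIV. c $ j * h $ j)) (at x)"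
    and bound: "\<And>x. x \<in> cball z r \<Longrightarrow> cmod (f x) \<le> M"
  shows "cmod (cpartial f i z) \<le> M / r"
proof -
  define g where "g w = f (z + axis i w)" for w
  have slice: "\<exists>c::complex^'m. (f has_derivative (\<lambda>h. \<Sum>j\<in>UNIV. c $ j * h $ j)) (at (z + axis i w))
                  \<and> (g has_field_derivative c $ i) (at w)" if "w \<in> ball 0 (2*r)" for w
    using deriv[of "z + axis i w"] that has_field_derivative_axis_slice
    unfolding g_def by fastforce
  then have hol: "g holomorphic_on ball 0 (2*r)"
    by (metis field_differentiable_at_within field_differentiable_def holomorphic_on_def)
  obtain c :: "complex^'m" where "(f has_derivative (\<lambda>h. \<Sum>j\<in>UNIV. c $ j * h $ j)) (at z)"
      and "(g has_field_derivative c $ i) (at 0)"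
    using slice[of 0] r by auto
  then have "cpartial f i z = deriv g 0"
    by (metis DERIV_imp_deriv cpartial_eq_coefficient)
  moreover have "cmod ((deriv ^^ 1) g 0) \<le> fact 1 * M / r ^ 1"
  proof (rule Cauchy_inequality)
    show "g holomorphic_on ball 0 r"
      using hol r by (auto intro: holomorphic_on_subset)
    show "continuous_on (cball 0 r) g"
      using r by (intro continuous_on_subset[OF holomorphic_on_imp_continuous_on[OF hol]]) auto
    show "cmod (g x) \<le> M" if "cmod (0 - x) = r" for x
      using bound[of "z + axis i x"] that by (simp add: g_def)
  qed (rule r)
  ultimately show ?thesis by simp
qed

lemma holo_near_isCont: "holo_near f P \<Longrightarrow> isCont f P"
  unfolding holo_near_def using has_derivative_continuous by blast

lemma holo_near_cpartial_bounded:
  assumes "holo_near f P"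
  shows "\<exists>K. \<forall>\<^sub>F z in nhds P. \<forall>i. cmod (cpartial f i z) \<le> K"
proof -
  obtain V where "open V" "P \<in> V"
    and deriv: "\<And>z. z \<in> V \<Longrightarrow> \<exists>c::complex^'a. (f has_derivative (\<lambda>h. \<Sum>j\<in>UNIV. c $ j * h $ j)) (at z)"
    using assms unfolding holo_near_def by blast
  then obtain r where r: "r > 0" "ball P (3*r) \<subseteq> V"
  proof -
    obtain e where "e > 0" "ball P e \<subseteq> V"
      using \<open>open V\<close> \<open>P \<in> V\<close> open_contains_ball by blast
    then show ?thesis using that[of "e/3"] by simp
  qed
  have "isCont f x" if "x \<in> cball P (2*r)" for x
  proof -
    have "x \<in> V" using that r by (auto simp: subset_iff)
    then show ?thesis using deriv has_derivative_continuous by blast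
  qed
  then have "continuous_on (cball P (2*r)) f"
    by (simp add: continuous_at_imp_continuous_on)
  then obtain M where M: "\<And>x. x \<in> cball P (2*r) \<Longrightarrow> cmod (f x) \<le> M"
    by (metis bounded_iff compact_cball compact_continuous_image compact_imp_bounded image_eqI)
  have bound: "cmod (cpartial f i z) \<le> M / r" if "z \<in> ball P r" for z i
  proof (rule norm_cpartial_le[OF r(1)])
    show "\<exists>c::complex^'a. (f has_derivative (\<lambda>h. \<Sum>j\<in>UNIV. c $ j * h $ j)) (at x)"
      if "x \<in> ball z (2*r)" for x
    proof -
      have "dist P x < 3*r"
        using that \<open>z \<in> ball P r\<close> dist_triangle[of P x z] by (simp add: dist_commute)
      then show ?thesis using r(2) deriv by auto
    qed
    show "cmod (f x) \<le> M" if "x \<in> cball z r" for x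
      using that \<open>z \<in> ball P r\<close> M dist_triangle[of P x z] by (auto simp: dist_commute)
  qed
  have "\<forall>\<^sub>F z in nhds P. z \<in> ball P r"
    using r(1) by (intro eventually_nhds_in_open) auto
  then have "\<forall>\<^sub>F z in nhds P. \<forall>i. cmod (cpartial f i z) \<le> M / r"
    by eventually_elim (use bound in blast)
  then show ?thesis ..
qed

lemma holo_near_cpartial_bounded_finite:
  assumes "finite H" "\<forall>h\<in>H. holo_near h P"
  shows "\<exists>K\<ge>0. \<forall>\<^sub>F z in nhds P. \<forall>h\<in>H. \<forall>i. cmod (cpartial h i z) \<le> K"
  using assms
proof (induction H rule: finite_induct)
  case (insert h H)
  then obtain K K' where "K \<ge> 0" and K: "\<forall>\<^sub>F z in nhds P. \<forall>h\<in>H. \<forall>i. cmod (cpartial h i z) \<le> K"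
    and K': "\<forall>\<^sub>F z in nhds P. \<forall>i. cmod (cpartial h i z) \<le> K'"
    using holo_near_cpartial_bounded by blast
  from K K' have "\<forall>\<^sub>F z in nhds P. \<forall>h'\<in>insert h H. \<forall>i. cmod (cpartial h' i z) \<le> max K K'"
    by eventually_elim (auto simp: le_max_iff_disj)
  then show ?case using \<open>K \<ge> 0\<close> by (intro exI[of _ "max K K'"]) auto
qed (intro exI[of _ 0], simp)

lemma eventually_norm_le_of_zero:
  assumes "holo_near f P" "f P = 0" "e > 0"
  shows "\<forall>\<^sub>F z in nhds P. cmod (f z) \<le> e"
proof -
  have "(f \<longlongrightarrow> 0) (nhds P)"
    using holo_near_isCont[OF assms(1)] assms(2) by (simp add: tendsto_nhds_iff isCont_def)
  then have "\<forall>\<^sub>F z in nhds P. dist (f z) 0 < e"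
    using assms(3) tendstoD by blast
  then show ?thesis by eventually_elim simp
qed

definition jac_mat :: "nat \<Rightarrow> (complex^('m::{finite,linorder}) \<Rightarrow> complex) list \<Rightarrow> complex^('m::{finite,linorder}) \<Rightarrow> complex Matrix.mat"
  where "jac_mat m hs z = Matrix.mat m m (\<lambda>(i, j). cpartial (hs ! i) (coord j) z)"

lemma jac_mat_carrier [simp]: "jac_mat m hs z \<in> carrier_mat m m"
  by (simp add: jac_mat_def)

lemma jac_eq_det: "jac m hs z = det (jac_mat m hs z)"
  unfolding det_def'[OF jac_mat_carrier] jac_def atLeast0LessThan
proof (intro sum.cong refl arg_cong2[where f = "(*)"] prod.cong)
  fix p i assume "p \<in> {p. p permutes {..<m}}" and "i \<in> {..<m}"
  then show "cpartial (hs ! i) (coord (p i)) z = jac_mat m hs z $$ (i, p i)"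
    using permutes_in_image[of p "{..<m}" i] by (simp add: jac_mat_def)
qed

lemma norm_jac_mset_eq:
  assumes len: "length hs = m" and ms: "mset hs' = mset hs"
  shows "cmod (jac m hs' z) = cmod (jac m hs z)"
proof -
  obtain p where p: "p permutes {..<length hs}" and hs': "permute_list p hs = hs'"
    using mset_eq_permutation[OF ms] by blast
  have p': "p permutes {0..<m}" using p len by (simp add: atLeast0LessThan)
  have "jac_mat m hs' z = Matrix.mat m m (\<lambda>(i, j). jac_mat m hs z $$ (p i, j))"
    using permutes_in_image[OF p'] len unfolding hs'[symmetric]
    by (intro eq_matI) (auto simp: jac_mat_def permute_list_nth[OF p])
  then have "det (jac_mat m hs' z) = of_int (sign p) * det (jac_mat m hs z)"
    using det_permute_rows[OF jac_mat_carrier p'] by simp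
  then show ?thesis
    by (simp add: jac_eq_det norm_mult sign_def)
qed

lemma jac_eq_0_if_not_distinct:
  assumes "length hs = m" and "\<not> distinct hs"
  shows "jac m hs z = 0"
proof -
  obtain i j where ij: "i < m" "j < m" "i \<noteq> j" "hs ! i = hs ! j"
    using assms by (auto simp: distinct_conv_nth)
  then have "row (jac_mat m hs z) i = row (jac_mat m hs z) j"
    by (auto simp: jac_mat_def)
  then show ?thesis
    unfolding jac_eq_det by (rule det_identical_rows[OF jac_mat_carrier ij(3,1,2)])
qed

lemma jac_Suc_expand:
  assumes len: "length hs = Suc m"
  shows "jac (Suc m) hs z = (\<Sum>i<Suc m. (-1) ^ (i + m) * cpartial (hs ! i) (coord m) z *
            jac m (take i hs @ drop (Suc i) hs) z)"
proof -
  have minor: "mat_delete (jac_mat (Suc m) hs z) i m = jac_mat m (take i hs @ drop (Suc i) hs) z"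
    if "i < Suc m" for i
    unfolding mat_delete_def jac_mat_def
    by (rule eq_matI) (use that len in \<open>auto simp: nth_append min_def\<close>)
  have entry: "jac_mat (Suc m) hs z $$ (i, m) = cpartial (hs ! i) (coord m) z" if "i < Suc m" for i
    using that by (simp add: jac_mat_def)
  have "jac (Suc m) hs z = (\<Sum>i<Suc m. jac_mat (Suc m) hs z $$ (i, m) * cofactor (jac_mat (Suc m) hs z) i m)"
    unfolding jac_eq_det by (rule laplace_expansion_column[OF jac_mat_carrier]) simp
  also have "\<dots> = (\<Sum>i<Suc m. (-1) ^ (i + m) * cpartial (hs ! i) (coord m) z *
            jac m (take i hs @ drop (Suc i) hs) z)"
    by (intro sum.cong refl) (simp add: entry cofactor_def minor jac_eq_det)
  finally show ?thesis .
qed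

lemma norm_jac_Suc_le:
  assumes "length hs = Suc m"
    and "\<And>i. i < Suc m \<Longrightarrow> cmod (cpartial (hs ! i) (coord m) z) \<le> K"
    and "\<And>i. i < Suc m \<Longrightarrow> cmod (jac m (take i hs @ drop (Suc i) hs) z) \<le> M"
  shows "cmod (jac (Suc m) hs z) \<le> real (Suc m) * K * M"
proof -
  have "cmod (jac (Suc m) hs z) \<le> (\<Sum>i<Suc m. cmod (cpartial (hs ! i) (coord m) z) *
            cmod (jac m (take i hs @ drop (Suc i) hs) z))"
    unfolding jac_Suc_expand[OF assms(1)] by (rule order_trans[OF norm_sum]) (simp add: norm_mult norm_power)
  also have "\<dots> \<le> (\<Sum>i<Suc m. K * M)"
  proof (intro sum_mono mult_mono)
    show "0 \<le> K" using assms(2)[of 0] norm_ge_zero[of "cpartial (hs ! 0) (coord m) z"] by linarith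
  qed (simp_all add: assms(2,3))
  finally show ?thesis by simp
qed

lemma finite_incr_tuples: "finite (incr_tuples N r)"
proof (rule finite_subset)
  show "incr_tuples N r \<subseteq> {xs. set xs \<subseteq> {1..N} \<and> length xs = r}"
    by (auto simp: incr_tuples_def)
qed (simp add: finite_lists_length_eq)

lemma sorted_wrt_less_take_drop_Suc:
  assumes "sorted_wrt (<) (xs :: 'a::linorder list)"
  shows "sorted_wrt (<) (take i xs @ drop (Suc i) xs)"
proof -
  have "\<forall>x\<in>set (take i xs). \<forall>y\<in>set (drop i xs). x < y"
    using assms sorted_wrt_append[of "(<)" "take i xs" "drop i xs"] by simp
  moreover have "set (drop (Suc i) xs) \<subseteq> set (drop i xs)"
    by (simp add: set_drop_subset_set_drop)
  ultimately show ?thesis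
    using sorted_wrt_take[OF assms, of i] sorted_wrt_drop[OF assms, of "Suc i"]
    by (auto simp: sorted_wrt_append)
qed

lemma take_drop_Suc_upt_eq_filter:
  assumes "t < k"
  shows "take t [1..<k+1] @ drop (Suc t) [1..<k+1] = filter (\<lambda>i. i \<noteq> t + 1) [1..<k+1]"
proof -
  have split: "[1..<k+1] = [1..<t+1] @ (t + 1) # [t+2..<k+1]"
    using assms upt_add_eq_append[of 1 "t+1" "k - t"] by (simp add: upt_conv_Cons)
  have "filter (\<lambda>i. i \<noteq> t + 1) [1..<t+1] = [1..<t+1]"
    and "filter (\<lambda>i. i \<noteq> t + 1) [t+2..<k+1] = [t+2..<k+1]"
    by (auto simp: filter_id_conv)
  then show ?thesis
    unfolding split by (simp del: upt_Suc)
qed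

lemma norm_jac_snoc_le_sum_tuples:
  fixes f :: "nat \<Rightarrow> complex^('m::{finite,linorder}) \<Rightarrow> complex"
  assumes \<mu>: "sorted_wrt (<) \<mu>" "set \<mu> \<subseteq> {1..N}" and \<nu>: "\<nu> \<in> {1..N}"
    and len: "length \<mu> + length gs + 1 = n"
  shows "cmod (jac n (map f \<mu> @ gs @ [f \<nu>]) z)
    \<le> (\<Sum>\<kappa>\<in>incr_tuples N (Suc (length \<mu>)). cmod (jac n (map f \<kappa> @ gs) z))"
proof (cases "\<nu> \<in> set \<mu>")
  case True
  then have "jac n (map f \<mu> @ gs @ [f \<nu>]) z = 0"
    using len by (intro jac_eq_0_if_not_distinct) auto
  then show ?thesis by (simp add: sum_nonneg)
next
  case False
  then have ins: "insort \<nu> \<mu> \<in> incr_tuples N (Suc (length \<mu>))"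
    using \<mu> \<nu> by (auto simp: incr_tuples_def strict_sorted_iff sorted_insort distinct_insort set_insort_key)
  have "cmod (jac n (map f \<mu> @ gs @ [f \<nu>]) z) = cmod (jac n (map f (insort \<nu> \<mu>) @ gs) z)"
    using len by (intro norm_jac_mset_eq) auto
  also have "\<dots> \<le> (\<Sum>\<kappa>\<in>incr_tuples N (Suc (length \<mu>)). cmod (jac n (map f \<kappa> @ gs) z))"
    by (rule member_le_sum[OF ins]) (simp_all add: finite_incr_tuples)
  finally show ?thesis .
qed

lemma norm_jac_minor_le:
  fixes f G :: "nat \<Rightarrow> complex^('m::{finite,linorder}) \<Rightarrow> complex"
  assumes "k \<le> n" and \<mu>: "\<mu> \<in> incr_tuples N (n - k)" and \<nu>: "\<nu> \<in> {1..N}" and "i < Suc n"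
  defines "hs \<equiv> map f \<mu> @ map G [1..<k+1] @ [f \<nu>]"
  shows "cmod (jac n (take i hs @ drop (Suc i) hs) z)
    \<le> (\<Sum>\<mu>'\<in>incr_tuples N (n - k). cmod (jac n (map f \<mu>' @ map G [1..<k+1]) z))
      + (\<Sum>j=1..k. \<Sum>\<kappa>\<in>incr_tuples N (n - k + 1).
           cmod (jac n (map f \<kappa> @ map G (filter (\<lambda>i. i \<noteq> j) [1..<k+1])) z))"
    (is "_ \<le> ?SA + ?T")
proof -
  have len: "length \<mu> = n - k" and sorted: "sorted_wrt (<) \<mu>" and range: "set \<mu> \<subseteq> {1..N}"
    using \<mu> by (auto simp: incr_tuples_def)
  have "0 \<le> ?SA" "0 \<le> ?T" by (simp_all add: sum_nonneg)
  consider "i < n - k" | "n - k \<le> i" "i < n" | "i = n" using \<open>i < Suc n\<close> by linarith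
  then show ?thesis
  proof cases
    case 1
    define \<mu>' where "\<mu>' = take i \<mu> @ drop (Suc i) \<mu>"
    have "take i hs @ drop (Suc i) hs = map f \<mu>' @ map G [1..<k+1] @ [f \<nu>]"
      using 1 len by (simp add: hs_def \<mu>'_def take_map drop_map)
    moreover have "sorted_wrt (<) \<mu>'" "set \<mu>' \<subseteq> {1..N}" "Suc (length \<mu>') = n - k"
      using 1 len range set_take_subset[of i \<mu>] set_drop_subset[of "Suc i" \<mu>]
      by (auto simp: \<mu>'_def sorted_wrt_less_take_drop_Suc[OF sorted])
    ultimately have "cmod (jac n (take i hs @ drop (Suc i) hs) z) \<le> ?SA"
      using norm_jac_snoc_le_sum_tuples[of \<mu>' N \<nu> "map G [1..<k+1]" n f z] \<nu> \<open>k \<le> n\<close>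
      by (simp del: upt_Suc)
    then show ?thesis using \<open>0 \<le> ?T\<close> by linarith
  next
    case 2
    define t where "t = i - (n - k)"
    define gs where "gs = filter (\<lambda>i. i \<noteq> t + 1) [1..<k+1]"
    have t: "t < k" "i = length \<mu> + t"
      using 2 len \<open>k \<le> n\<close> by (auto simp: t_def)
    have "take i hs @ drop (Suc i) hs
        = map f \<mu> @ map G (take t [1..<k+1] @ drop (Suc t) [1..<k+1]) @ [f \<nu>]"
      using t by (simp add: hs_def take_map drop_map del: upt_Suc)
    then have minor: "take i hs @ drop (Suc i) hs = map f \<mu> @ map G gs @ [f \<nu>]"
      unfolding gs_def take_drop_Suc_upt_eq_filter[OF t(1)] .
    have "length gs = k - 1"
      using t(1) unfolding gs_def take_drop_Suc_upt_eq_filter[OF t(1), symmetric] by (simp del: upt_Suc)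
    then have "cmod (jac n (take i hs @ drop (Suc i) hs) z)
        \<le> (\<Sum>\<kappa>\<in>incr_tuples N (n - k + 1). cmod (jac n (map f \<kappa> @ map G gs) z))"
      using norm_jac_snoc_le_sum_tuples[OF sorted range \<nu>, of "map G gs" n f z] minor t len \<open>k \<le> n\<close>
      by simp
    also have "\<dots> \<le> ?T"
      using t(1) member_le_sum[of "t + 1" "{1..k}" "\<lambda>j. \<Sum>\<kappa>\<in>incr_tuples N (n - k + 1).
          cmod (jac n (map f \<kappa> @ map G (filter (\<lambda>i. i \<noteq> j) [1..<k+1])) z)"]
      by (simp add: gs_def sum_nonneg del: upt_Suc)
    finally show ?thesis using \<open>0 \<le> ?SA\<close> by linarith
  next
    case 3
    then have "take i hs @ drop (Suc i) hs = map f \<mu> @ map G [1..<k+1]"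
      using len \<open>k \<le> n\<close> by (simp add: hs_def)
    moreover have "cmod (jac n (map f \<mu> @ map G [1..<k+1]) z) \<le> ?SA"
      by (rule member_le_sum[OF \<mu>]) (simp_all add: finite_incr_tuples)
    ultimately show ?thesis using \<open>0 \<le> ?T\<close> by simp
  qed
qed

lemma sum_norm_le_absorb:
  fixes A E :: "'i \<Rightarrow> complex" and B :: "'i \<Rightarrow> 'j \<Rightarrow> complex" and F :: "'j \<Rightarrow> complex"
  assumes "finite I" and "finite J" and "t \<ge> 0"
    and E: "\<And>\<mu>. \<mu> \<in> I \<Longrightarrow> E \<mu> = A \<mu> + (\<Sum>\<nu>\<in>J. B \<mu> \<nu> * F \<nu>)"
    and B: "\<And>\<mu> \<nu>. \<mu> \<in> I \<Longrightarrow> \<nu> \<in> J \<Longrightarrow> cmod (B \<mu> \<nu>) \<le> c * ((\<Sum>\<mu>\<in>I. cmod (A \<mu>)) + t)"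
    and F: "\<And>\<nu>. \<nu> \<in> J \<Longrightarrow> cmod (F \<nu>) \<le> \<epsilon>"
    and small: "real (card I * card J) * \<epsilon> * c \<le> 1 / 2"
  shows "(\<Sum>\<mu>\<in>I. cmod (A \<mu>)) \<le> 2 * ((\<Sum>\<mu>\<in>I. cmod (E \<mu>)) + t)"
proof -
  define S where "S = (\<Sum>\<mu>\<in>I. cmod (A \<mu>)) + t"
  have "S \<ge> 0" using \<open>t \<ge> 0\<close> by (simp add: S_def sum_nonneg)
  have "cmod (A \<mu>) \<le> cmod (E \<mu>) + real (card J) * (c * S * \<epsilon>)" if "\<mu> \<in> I" for \<mu>
  proof -
    have "cmod (A \<mu>) \<le> cmod (E \<mu>) + (\<Sum>\<nu>\<in>J. cmod (B \<mu> \<nu>) * cmod (F \<nu>))"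
      using E[OF that] norm_triangle_ineq4[of "E \<mu>" "\<Sum>\<nu>\<in>J. B \<mu> \<nu> * F \<nu>"]
        norm_sum[of "\<lambda>\<nu>. B \<mu> \<nu> * F \<nu>" J] by (simp add: norm_mult)
    also have "(\<Sum>\<nu>\<in>J. cmod (B \<mu> \<nu>) * cmod (F \<nu>)) \<le> (\<Sum>\<nu>\<in>J. c * S * \<epsilon>)"
    proof (rule sum_mono)
      fix \<nu> assume "\<nu> \<in> J"
      have bound: "cmod (B \<mu> \<nu>) \<le> c * S" using B[OF that \<open>\<nu> \<in> J\<close>] by (simp add: S_def)
      show "cmod (B \<mu> \<nu>) * cmod (F \<nu>) \<le> c * S * \<epsilon>"
        using mult_mono[OF bound F[OF \<open>\<nu> \<in> J\<close>] order_trans[OF norm_ge_zero bound] norm_ge_zero] .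
    qed
    finally show ?thesis by simp
  qed
  then have "(\<Sum>\<mu>\<in>I. cmod (A \<mu>)) \<le> (\<Sum>\<mu>\<in>I. cmod (E \<mu>) + real (card J) * (c * S * \<epsilon>))"
    by (rule sum_mono)
  also have "\<dots> = (\<Sum>\<mu>\<in>I. cmod (E \<mu>)) + real (card I * card J) * \<epsilon> * c * S"
    by (simp add: sum.distrib mult_ac)
  also have "\<dots> \<le> (\<Sum>\<mu>\<in>I. cmod (E \<mu>)) + 1 / 2 * S"
    using mult_right_mono[OF small \<open>S \<ge> 0\<close>] by simp
  finally show ?thesis
    using \<open>t \<ge> 0\<close> unfolding S_def by (simp add: field_simps)
qed

lemma norm_jac_extended_le:
  fixes f G :: "nat \<Rightarrow> complex^('m::{finite,linorder}) \<Rightarrow> complex"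
  assumes "k \<le> n" and \<mu>: "\<mu> \<in> incr_tuples N (n - k)" and \<nu>: "\<nu> \<in> {1..N}"
    and K: "\<forall>h\<in>f ` {1..N} \<union> G ` {1..k}. \<forall>i. cmod (cpartial h i z) \<le> K"
  shows "cmod (jac (Suc n) (map f \<mu> @ map G [1..<k+1] @ [f \<nu>]) z)
    \<le> real (Suc n) * K *
      ((\<Sum>\<mu>'\<in>incr_tuples N (n - k). cmod (jac n (map f \<mu>' @ map G [1..<k+1]) z))
      + (\<Sum>j=1..k. \<Sum>\<kappa>\<in>incr_tuples N (n - k + 1).
           cmod (jac n (map f \<kappa> @ map G (filter (\<lambda>i. i \<noteq> j) [1..<k+1])) z)))"
proof (rule norm_jac_Suc_le)
  let ?hs = "map f \<mu> @ map G [1..<k+1] @ [f \<nu>]"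
  have "length \<mu> = n - k" "set \<mu> \<subseteq> {1..N}"
    using \<mu> by (auto simp: incr_tuples_def)
  then show len: "length ?hs = Suc n"
    using \<open>k \<le> n\<close> by (simp del: upt_Suc)
  have "set ?hs \<subseteq> f ` {1..N} \<union> G ` {1..k}"
    using \<open>set \<mu> \<subseteq> {1..N}\<close> \<nu> by auto
  then show "cmod (cpartial (?hs ! i) (coord n) z) \<le> K" if "i < Suc n" for i
    using K nth_mem[of i ?hs] that len by auto
qed (rule norm_jac_minor_le[OF assms(1-3)])

lemma jac_estimates_at:
  fixes f G :: "nat \<Rightarrow> complex^('m::{finite,linorder}) \<Rightarrow> complex"
  assumes "k \<le> n"
    and K: "\<forall>h\<in>f ` {1..N} \<union> G ` {1..k}. \<forall>i. cmod (cpartial h i z) \<le> K"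
    and f_small: "\<forall>\<nu>\<in>{1..N}. cmod (f \<nu> z) \<le> \<epsilon>"
    and small: "real (card (incr_tuples N (n - k)) * N) * \<epsilon> * (real (Suc n) * K) \<le> 1 / 2"
  defines "A \<equiv> \<lambda>\<mu>. jac n (map f \<mu> @ map G [1..<k+1]) z"
    and "B \<equiv> \<lambda>\<mu> \<nu>. jac (Suc n) (map f \<mu> @ map G [1..<k+1] @ [f \<nu>]) z"
    and "T \<equiv> \<Sum>j=1..k. \<Sum>\<kappa>\<in>incr_tuples N (n - k + 1).
            cmod (jac n (map f \<kappa> @ map G (filter (\<lambda>i. i \<noteq> j) [1..<k+1])) z)"
  shows "(\<Sum>\<mu>\<in>incr_tuples N (n - k). cmod (A \<mu>))
           \<le> 2 * ((\<Sum>\<mu>\<in>incr_tuples N (n - k). cmod (A \<mu> + (\<Sum>\<nu>=1..N. B \<mu> \<nu> * cnj (f \<nu> z)))) + T)"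
    and "\<mu> \<in> incr_tuples N (n - k) \<Longrightarrow> \<nu> \<in> {1..N} \<Longrightarrow>
           cmod (B \<mu> \<nu>) \<le> real (Suc n) * K * ((\<Sum>\<mu>'\<in>incr_tuples N (n - k). cmod (A \<mu>')) + T)"
proof -
  show B_le: "cmod (B \<mu> \<nu>) \<le> real (Suc n) * K * ((\<Sum>\<mu>'\<in>incr_tuples N (n - k). cmod (A \<mu>')) + T)"
    if "\<mu> \<in> incr_tuples N (n - k)" "\<nu> \<in> {1..N}" for \<mu> \<nu>
    using norm_jac_extended_le[OF \<open>k \<le> n\<close> that K] by (simp add: A_def B_def T_def)
  have "T \<ge> 0" by (simp add: T_def sum_nonneg)
  show "(\<Sum>\<mu>\<in>incr_tuples N (n - k). cmod (A \<mu>))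
      \<le> 2 * ((\<Sum>\<mu>\<in>incr_tuples N (n - k). cmod (A \<mu> + (\<Sum>\<nu>=1..N. B \<mu> \<nu> * cnj (f \<nu> z)))) + T)"
  proof (rule sum_norm_le_absorb[where E = "\<lambda>\<mu>. A \<mu> + (\<Sum>\<nu>=1..N. B \<mu> \<nu> * cnj (f \<nu> z))"
        and F = "\<lambda>\<nu>. cnj (f \<nu> z)" and c = "real (Suc n) * K"])
    show "real (card (incr_tuples N (n - k)) * card {1..N}) * \<epsilon> * (real (Suc n) * K) \<le> 1 / 2"
      using small by simp
  qed (use \<open>T \<ge> 0\<close> f_small B_le in \<open>simp_all add: finite_incr_tuples\<close>)
qed

theorem mainTheorem5:
  fixes P0 :: "complex^('m::{finite,linorder})"
    and f G :: "nat \<Rightarrow> complex^('m::{finite,linorder}) \<Rightarrow> complex"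
    and n N k :: nat
  assumes dim: "CARD('m) = n + 1"
    and hf: "\<And>\<mu>. \<mu> \<in> {1..N} \<Longrightarrow> holo_near (f \<mu>) P0"
    and f0: "\<And>\<mu>. \<mu> \<in> {1..N} \<Longrightarrow> f \<mu> P0 = 0"
    and hk: "k \<le> n"
    and hG: "\<And>j. j \<in> {1..k} \<Longrightarrow> holo_near (G j) P0"
  defines "A \<equiv> \<lambda>\<mu> z. jac n (map f \<mu> @ map G [1..<k+1]) z"
    and "B \<equiv> \<lambda>\<mu> \<nu> z. jac (n+1) (map f \<mu> @ map G [1..<k+1] @ [f \<nu>]) z"
  defines "E \<equiv> \<lambda>\<mu> z. A \<mu> z + (\<Sum>\<nu>=1..N. B \<mu> \<nu> z * cnj (f \<nu> z))"
    and "T \<equiv> \<lambda>z. (\<Sum>j=1..k. \<Sum>lam\<in>incr_tuples N (n-k+1).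
            cmod (jac n (map f lam @ map G (filter (\<lambda>i. i \<noteq> j) [1..<k+1])) z))"
  shows "\<exists>U C. open U \<and> P0 \<in> U \<and> C > 0 \<and>
    (\<forall>z\<in>U.
      (\<Sum>\<mu>\<in>incr_tuples N (n-k). cmod (A \<mu> z))
         \<le> C * ((\<Sum>\<mu>\<in>incr_tuples N (n-k). cmod (E \<mu> z)) + T z)
      \<and> (\<forall>\<mu>\<in>incr_tuples N (n-k). \<forall>\<nu>\<in>{1..N}.
           cmod (B \<mu> \<nu> z) \<le> C * ((\<Sum>\<mu>'\<in>incr_tuples N (n-k). cmod (A \<mu>' z)) + T z)))"
proof -
  let ?I = "incr_tuples N (n - k)" and ?H = "f ` {1..N} \<union> G ` {1..k}"
  have "\<forall>h\<in>?H. holo_near h P0"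
    using hf hG by blast
  then obtain K where "K \<ge> 0" and K: "\<forall>\<^sub>F z in nhds P0. \<forall>h\<in>?H. \<forall>i. cmod (cpartial h i z) \<le> K"
    using holo_near_cpartial_bounded_finite[of ?H P0] by auto
  define c where "c = real (Suc n) * K"
  define M where "M = real (card ?I * N) * c"
  define \<epsilon> where "\<epsilon> = 1 / (2 * (M + 1))"
  have "M \<ge> 0" using \<open>K \<ge> 0\<close> by (simp add: M_def c_def)
  then have "\<epsilon> > 0" by (simp add: \<epsilon>_def)
  have "real (card ?I * N) * \<epsilon> * c = M / (2 * (M + 1))" by (simp add: \<epsilon>_def M_def)
  also have "\<dots> \<le> 1 / 2" using \<open>M \<ge> 0\<close> by (simp add: divide_simps)
  finally have small: "real (card ?I * N) * \<epsilon> * c \<le> 1 / 2" .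
  have "\<forall>\<^sub>F z in nhds P0. \<forall>\<nu>\<in>{1..N}. cmod (f \<nu> z) \<le> \<epsilon>"
    using \<open>\<epsilon> > 0\<close> by (intro eventually_ball_finite ballI eventually_norm_le_of_zero hf f0) auto
  with K have "\<forall>\<^sub>F z in nhds P0.
      (\<forall>h\<in>?H. \<forall>i. cmod (cpartial h i z) \<le> K) \<and> (\<forall>\<nu>\<in>{1..N}. cmod (f \<nu> z) \<le> \<epsilon>)"
    by eventually_elim blast
  then obtain U where "open U" "P0 \<in> U" and bounds: "\<forall>z\<in>U.
      (\<forall>h\<in>?H. \<forall>i. cmod (cpartial h i z) \<le> K) \<and> (\<forall>\<nu>\<in>{1..N}. cmod (f \<nu> z) \<le> \<epsilon>)"
    unfolding eventually_nhds by auto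
  have T_nonneg: "T z \<ge> 0" for z by (simp add: T_def sum_nonneg)
  show ?thesis
  proof (intro exI conjI ballI)
    fix z assume "z \<in> U"
    have "\<forall>h\<in>?H. \<forall>i. cmod (cpartial h i z) \<le> K" "\<forall>\<nu>\<in>{1..N}. cmod (f \<nu> z) \<le> \<epsilon>"
      using bounds \<open>z \<in> U\<close> by auto
    note estimates = jac_estimates_at[OF hk this small[unfolded c_def]]
    have "(\<Sum>\<mu>\<in>?I. cmod (A \<mu> z)) \<le> 2 * ((\<Sum>\<mu>\<in>?I. cmod (E \<mu> z)) + T z)"
      using estimates(1) by (simp add: A_def B_def E_def T_def)
    then show "(\<Sum>\<mu>\<in>?I. cmod (A \<mu> z)) \<le> max 2 c * ((\<Sum>\<mu>\<in>?I. cmod (E \<mu> z)) + T z)"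
      by (rule order_trans) (intro mult_right_mono; simp add: T_nonneg sum_nonneg)
    fix \<mu> \<nu> assume "\<mu> \<in> ?I" "\<nu> \<in> {1..N}"
    then have "cmod (B \<mu> \<nu> z) \<le> c * ((\<Sum>\<mu>'\<in>?I. cmod (A \<mu>' z)) + T z)"
      using estimates(2) by (simp add: A_def B_def T_def c_def)
    then show "cmod (B \<mu> \<nu> z) \<le> max 2 c * ((\<Sum>\<mu>'\<in>?I. cmod (A \<mu>' z)) + T z)"
      by (rule order_trans) (intro mult_right_mono; simp add: T_nonneg sum_nonneg)
  qed (use \<open>open U\<close> \<open>P0 \<in> U\<close> in auto)
qed

end
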